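(* Let $\mathcal S_1=(C,\phi_1,F)$ and $\mathcal S_2=(C,\phi_2,F)$ be two systems with common component set $C=[n]$, semicoherent structure functions $\phi_1,\phi_2$, and continuous i.i.d. component lifetimes. Then for every $k,l\in\{0,\ldots,n\}$, \[ \overline S_{k,l}=\sum_{A\subseteq C,\ |A|=n-k}\ \sum_{B\subseteq C,\ |B|=n-l}q_0(A,B)\,\phi_1(A)\,\phi_2(B). \]
   Context: Let $n\ge1$, $C=[n]$, with component lifetimes $T_1,\ldots,T_n$ continuous and i.i.d. A structure function $\phi\colon\{0,1\}^n\to\{0,1\}$ is semicoherent if nondecreasing in each variable with $\phi(0,\ldots,0)=0$, $\phi(1,\ldots,1)=1$; Boolean vectors are identified with subsets via $x_i=1\iff i\in A$. With $X_j(t)=\mathrm{Ind}(T_j>t)$, $\mathbf X(t)=(X_1(t),\ldots,X_n(t))$, the lifetime $T_{\mathcal S}$ of $\mathcal S=(C,\phi,F)$ is the random time with $\phi(\mathbf X(t))=1$ iff $t<T_{\mathcal S}$. $T_{k:n}$ is the $k$-th smallest lifetime, $T_{0:n}=0$. The tail bivariate structure signature is $\overline S_{k,l}=\Pr(T_{\mathcal S_1}>T_{k:n}\text{ and }T_{\mathcal S_2}>T_{l:n})$, $k,l=0,\ldots,n$. The function $q_0$ is \[ q_0(A,B)=\begin{cases}\frac{(n-|A|)!\,(|A|-|B|)!\,|B|!}{n!} & \text{if } B\subseteq A,\\[2pt] \frac{(n-|B|)!\,(|B|-|A|)!\,|A|!}{n!} & \text{if } A\subseteq B,\\[2pt] 0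 & \text{otherwise.}\end{cases} \] *)

theory Defs
  imports "HOL-Probability.Probability"
begin

text \<open>Components are indexed by C = {1..n}; a Boolean state vector is identified
with the set of working components. A structure function is a predicate on sets.\<close>

definition semicoherent :: "nat \<Rightarrow> (nat set \<Rightarrow> bool) \<Rightarrow> bool" where
  "semicoherent n \<phi> \<longleftrightarrow>
     (\<forall>A B. A \<subseteq> B \<and> B \<subseteq> {1..n} \<longrightarrow> \<phi> A \<longrightarrow> \<phi> B) \<and> \<not> \<phi> {} \<and> \<phi> {1..n}"

definition state_set :: "nat \<Rightarrow> (nat \<Rightarrow> 'a \<Rightarrow> real) \<Rightarrow> real \<Rightarrow> 'a \<Rightarrow> nat set" where
  "state_set n T t \<omega> = {j \<in> {1..n}. T j \<omega> > t}"

definition is_system_lifetime ::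
  "'a measure \<Rightarrow> nat \<Rightarrow> (nat set \<Rightarrow> bool) \<Rightarrow> (nat \<Rightarrow> 'a \<Rightarrow> real) \<Rightarrow> ('a \<Rightarrow> real) \<Rightarrow> bool" where
  "is_system_lifetime M n \<phi> T TS \<longleftrightarrow>
     (\<forall>\<omega>\<in>space M. \<forall>t. \<phi> (state_set n T t \<omega>) \<longleftrightarrow> t < TS \<omega>)"

definition order_stat :: "nat \<Rightarrow> (nat \<Rightarrow> 'a \<Rightarrow> real) \<Rightarrow> nat \<Rightarrow> 'a \<Rightarrow> real" where
  "order_stat n T k \<omega> = (if k = 0 then 0 else sort (map (\<lambda>j. T j \<omega>) [1..<Suc n]) ! (k - 1))"

definition q0 :: "nat \<Rightarrow> nat set \<Rightarrow> nat set \<Rightarrow> real" where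
  "q0 n A B =
     (if B \<subseteq> A then fact (n - card A) * fact (card A - card B) * fact (card B) / fact n
      else if A \<subseteq> B then fact (n - card B) * fact (card B - card A) * fact (card A) / fact n
      else 0)"

end

theory Submission
  imports Defs
begin

text \<open>
  Almost surely the lifetimes are pairwise distinct and positive. Then the set of components
  still working at the \<open>k\<close>-th failure time is the unique set of \<open>n - k\<close> components
  outliving all others, so the event in question splits into the disjoint events that
  \<open>A\<close> and \<open>B\<close> are these sets, over \<open>|A| = n - k\<close>, \<open>|B| = n - l\<close> with \<open>\<phi>\<^sub>1 A\<close> and \<open>\<phi>\<^sub>2 B\<close>.
  Such an event is empty unless \<open>A\<close> and \<open>B\<close> are nested. For i.i.d. lifetimes the joint
  law is invariant under permutations of the components, so all nested pairs with given
  cardinalities are equally likely; as their events partition the sample space, each has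
  probability one over their number, which is \<open>q\<^sub>0(A, B)\<close>.
\<close>

section \<open>Order statistics\<close>

lemma sorted_nth_filter_less:
  fixes ys :: "'b::linorder list"
  assumes "sorted ys" "i < length ys"
  shows "length (filter (\<lambda>x. x < ys ! i) ys) \<le> i"
proof -
  have "filter (\<lambda>x. x < ys ! i) (drop i ys) = []"
    using assms by (auto simp: filter_empty_conv in_set_conv_nth intro!: sorted_nth_mono leD)
  then have "filter (\<lambda>x. x < ys ! i) ys = filter (\<lambda>x. x < ys ! i) (take i ys)"
    by (metis append_Nil2 append_take_drop_id filter_append)
  then show ?thesis
    by (metis length_filter_le length_take min.bounded_iff)
qed

lemma sorted_nth_filter_le:
  fixes ys :: "'b::linorder list"
  assumes "sorted ys" "i < length ys"
  shows "Suc i \<le> length (filter (\<lambda>x. x \<le> ys ! i) ys)"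
proof -
  have "\<forall>x\<in>set (take (Suc i) ys). x \<le> ys ! i"
    using assms by (auto simp: in_set_conv_nth intro!: sorted_nth_mono)
  then have "filter (\<lambda>x. x \<le> ys ! i) (take (Suc i) ys) = take (Suc i) ys"
    by simp
  then have "Suc i = length (filter (\<lambda>x. x \<le> ys ! i) (take (Suc i) ys))"
    using assms by simp
  also have "\<dots> \<le> length (filter (\<lambda>x. x \<le> ys ! i) ys)"
    by (metis append_take_drop_id filter_append length_append le_add1)
  finally show ?thesis .
qed

lemma length_filter_map_upt:
  "length (filter P (map f [1..<Suc n])) = card {j\<in>{1..n}. P (f j)}"
proof -
  have "length (filter P (map f [1..<Suc n])) = length (filter (P \<circ> f) [1..<Suc n])"
    by (simp add: filter_map)
  also have "\<dots> = card {j\<in>{1..n}. P (f j)}"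
    by (subst distinct_length_filter) (auto intro!: arg_cong[where f=card])
  finally show ?thesis .
qed

lemma
  assumes "1 \<le> k" "k \<le> n"
  shows card_less_order_stat: "card {j\<in>{1..n}. T j \<omega> < order_stat n T k \<omega>} < k"
    and card_le_order_stat: "k \<le> card {j\<in>{1..n}. T j \<omega> \<le> order_stat n T k \<omega>}"
    and order_stat_in_range: "order_stat n T k \<omega> \<in> (\<lambda>j. T j \<omega>) ` {1..n}"
proof -
  let ?xs = "map (\<lambda>j. T j \<omega>) [1..<Suc n]"
  have v: "order_stat n T k \<omega> = sort ?xs ! (k - 1)" and i: "k - 1 < length (sort ?xs)"
    using assms by (auto simp: order_stat_def)
  show "card {j\<in>{1..n}. T j \<omega> < order_stat n T k \<omega>} < k"
    using sorted_nth_filter_less[OF sorted_sort i] assms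
    by (simp only: v filter_sort length_sort length_filter_map_upt)
  show "k \<le> card {j\<in>{1..n}. T j \<omega> \<le> order_stat n T k \<omega>}"
    using sorted_nth_filter_le[OF sorted_sort i] assms
    by (simp only: v filter_sort length_sort length_filter_map_upt)
  have "sort ?xs ! (k - 1) \<in> set ?xs"
    using nth_mem[OF i] by simp
  then show "order_stat n T k \<omega> \<in> (\<lambda>j. T j \<omega>) ` {1..n}"
    by (auto simp: v)
qed

lemma order_stat_less_iff:
  assumes "1 \<le> k" "k \<le> n" "j \<in> {1..n}"
  shows "order_stat n T k \<omega> < T j \<omega> \<longleftrightarrow> k \<le> card {i\<in>{1..n}. T i \<omega> < T j \<omega>}"
proof
  assume "order_stat n T k \<omega> < T j \<omega>"
  then have "card {i\<in>{1..n}. T i \<omega> \<le> order_stat n T k \<omega>} \<le> card {i\<in>{1..n}. T i \<omega> < T j \<omega>}"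
    by (intro card_mono) auto
  then show "k \<le> card {i\<in>{1..n}. T i \<omega> < T j \<omega>}"
    using card_le_order_stat[OF assms(1,2), where T=T and \<omega>=\<omega>] by linarith
next
  assume k: "k \<le> card {i\<in>{1..n}. T i \<omega> < T j \<omega>}"
  show "order_stat n T k \<omega> < T j \<omega>"
  proof (rule ccontr)
    assume "\<not> order_stat n T k \<omega> < T j \<omega>"
    then have "card {i\<in>{1..n}. T i \<omega> < T j \<omega>} \<le> card {i\<in>{1..n}. T i \<omega> < order_stat n T k \<omega>}"
      by (intro card_mono) auto
    then show False
      using k card_less_order_stat[OF assms(1,2), where T=T and \<omega>=\<omega>] by linarith
  qed
qed

lemma card_state_set_order_stat:
  assumes inj: "inj_on (\<lambda>j. T j \<omega>) {1..n}" and pos: "\<forall>j\<in>{1..n}. 0 < T j \<omega>" and "k \<le> n"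
  shows "card (state_set n T (order_stat n T k \<omega>) \<omega>) = n - k"
proof (cases "k = 0")
  case True
  moreover have "state_set n T 0 \<omega> = {1..n}"
    using pos by (auto simp: state_set_def)
  ultimately show ?thesis
    by (simp add: order_stat_def)
next
  case False
  let ?v = "order_stat n T k \<omega>"
  obtain j where j: "j \<in> {1..n}" "?v = T j \<omega>"
    using order_stat_in_range[of k n T \<omega>] False \<open>k \<le> n\<close> by auto
  have "{i\<in>{1..n}. T i \<omega> \<le> ?v} = insert j {i\<in>{1..n}. T i \<omega> < ?v}"
    using j inj by (auto simp: order_le_less dest: inj_onD)
  then have "card {i\<in>{1..n}. T i \<omega> \<le> ?v} \<le> Suc (card {i\<in>{1..n}. T i \<omega> < ?v})"
    by (simp add: card_insert_if)
  then have "card {i\<in>{1..n}. T i \<omega> \<le> ?v} = k"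
    using card_less_order_stat[of k n T \<omega>] card_le_order_stat[of k n T \<omega>] False \<open>k \<le> n\<close>
    by linarith
  moreover have "state_set n T ?v \<omega> = {1..n} - {i\<in>{1..n}. T i \<omega> \<le> ?v}"
    by (auto simp: state_set_def)
  moreover have "card ({1..n} - {i\<in>{1..n}. T i \<omega> \<le> ?v}) = n - card {i\<in>{1..n}. T i \<omega> \<le> ?v}"
    by (subst card_Diff_subset) auto
  ultimately show ?thesis
    by simp
qed

section \<open>Measurability, ties and exchangeability\<close>

lemma pred_le_card:
  assumes "finite I" "\<And>i. i \<in> I \<Longrightarrow> Measurable.pred M (P i)"
  shows "Measurable.pred M (\<lambda>\<omega>. k \<le> card {i\<in>I. P i \<omega>})"
proof -
  let ?K = "{S. S \<subseteq> I \<and> card S = k}"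
  have "k \<le> card {i\<in>I. P i \<omega>} \<longleftrightarrow> (\<exists>S\<in>?K. \<forall>i\<in>S. P i \<omega>)" for \<omega>
  proof
    assume "k \<le> card {i\<in>I. P i \<omega>}"
    then obtain S where "S \<subseteq> {i\<in>I. P i \<omega>}" "card S = k"
      by (meson obtain_subset_with_card_n)
    then show "\<exists>S\<in>?K. \<forall>i\<in>S. P i \<omega>"
      by blast
  next
    assume "\<exists>S\<in>?K. \<forall>i\<in>S. P i \<omega>"
    then obtain S where "S \<subseteq> {i\<in>I. P i \<omega>}" "card S = k"
      by blast
    then show "k \<le> card {i\<in>I. P i \<omega>}"
      using assms(1) card_mono[of "{i\<in>I. P i \<omega>}" S] by simp
  qed
  moreover have "Measurable.pred M (\<lambda>\<omega>. \<exists>S\<in>?K. \<forall>i\<in>S. P i \<omega>)"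
  proof (rule pred_intros_finite)
    show "finite ?K"
      using assms(1) by (simp add: finite_subset[of _ "Pow I"] subset_iff)
    fix S assume "S \<in> ?K"
    then show "Measurable.pred M (\<lambda>\<omega>. \<forall>i\<in>S. P i \<omega>)"
      using assms finite_subset[of S I] by (intro pred_intros_finite(3)) auto
  qed
  ultimately show ?thesis
    by simp
qed

lemma pred_set_valued:
  assumes "finite I" "\<And>\<omega>. X \<omega> \<subseteq> I" "\<And>j. j \<in> I \<Longrightarrow> Measurable.pred M (\<lambda>\<omega>. j \<in> X \<omega>)"
  shows "Measurable.pred M (\<lambda>\<omega>. \<phi> (X \<omega>))"
proof -
  have "\<phi> (X \<omega>) \<longleftrightarrow> (\<exists>S\<in>{S\<in>Pow I. \<phi> S}. (\<forall>j\<in>S. j \<in> X \<omega>) \<and> (\<forall>j\<in>I - S. j \<notin> X \<omega>))" for \<omega>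
  proof
    assume "\<phi> (X \<omega>)"
    then show "\<exists>S\<in>{S\<in>Pow I. \<phi> S}. (\<forall>j\<in>S. j \<in> X \<omega>) \<and> (\<forall>j\<in>I - S. j \<notin> X \<omega>)"
      using assms(2) by (intro bexI[of _ "X \<omega>"]) auto
  next
    assume "\<exists>S\<in>{S\<in>Pow I. \<phi> S}. (\<forall>j\<in>S. j \<in> X \<omega>) \<and> (\<forall>j\<in>I - S. j \<notin> X \<omega>)"
    then obtain S where "S \<subseteq> I" "\<phi> S" "\<forall>j\<in>S. j \<in> X \<omega>" "\<forall>j\<in>I - S. j \<notin> X \<omega>"
      by auto
    moreover from this have "X \<omega> = S"
      using assms(2)[of \<omega>] by blast
    ultimately show "\<phi> (X \<omega>)"
      by simp
  qed
  moreover have "Measurable.pred M (\<lambda>\<omega>. \<exists>S\<in>{S\<in>Pow I. \<phi> S}. (\<forall>j\<in>S. j \<in> X \<omega>) \<and> (\<forall>j\<in>I - S. j \<notin> X \<omega>))"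
  proof (rule pred_intros_finite)
    show "finite {S\<in>Pow I. \<phi> S}"
      using assms(1) by simp
    fix S assume "S \<in> {S\<in>Pow I. \<phi> S}"
    then have "S \<subseteq> I"
      by simp
    then show "Measurable.pred M (\<lambda>\<omega>. (\<forall>j\<in>S. j \<in> X \<omega>) \<and> (\<forall>j\<in>I - S. j \<notin> X \<omega>))"
      using assms(1,3) finite_subset[OF \<open>S \<subseteq> I\<close> assms(1)] \<open>S \<subseteq> I\<close>
      by (intro pred_intros_logic(3) pred_intros_finite(3) pred_intros_logic(2)) auto
  qed
  ultimately show ?thesis
    by simp
qed

lemma (in prob_space) AE_indep_var_neq:
  fixes X Y :: "'a \<Rightarrow> real"
  assumes indep: "indep_var borel X borel Y"
    and atomless: "\<And>y. prob {\<omega>\<in>space M. Y \<omega> = y} = 0"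
  shows "AE \<omega> in M. X \<omega> \<noteq> Y \<omega>"
proof -
  have [measurable]: "X \<in> borel_measurable M" "Y \<in> borel_measurable M"
    using indep by (auto dest: indep_var_rv1 indep_var_rv2)
  let ?DX = "distr M borel X" and ?DY = "distr M borel Y"
  let ?diag = "{p::real \<times> real. fst p = snd p}"
  have diag: "?diag \<in> sets (borel \<Otimes>\<^sub>M borel)"
  proof -
    have "{p \<in> space (borel \<Otimes>\<^sub>M borel). fst p = snd p} \<in> sets (borel \<Otimes>\<^sub>M (borel :: real measure))"
      by measurable
    then show ?thesis
      by (simp add: space_pair_measure)
  qed
  interpret DY: prob_space ?DY
    by (rule prob_space_distr) simp
  have "emeasure M {\<omega>\<in>space M. X \<omega> = Y \<omega>} = emeasure (distr M (borel \<Otimes>\<^sub>M borel) (\<lambda>\<omega>. (X \<omega>, Y \<omega>))) ?diag"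
    using diag by (subst emeasure_distr) (auto intro!: arg_cong2[where f=emeasure])
  also have "\<dots> = emeasure (?DX \<Otimes>\<^sub>M ?DY) ?diag"
    using indep by (simp add: indep_var_distribution_eq)
  also have "\<dots> = (\<integral>\<^sup>+x. emeasure ?DY (Pair x -` ?diag) \<partial>?DX)"
    by (rule DY.emeasure_pair_measure_alt) (use diag in simp)
  also have "\<dots> = 0"
  proof -
    have "emeasure ?DY (Pair x -` ?diag) = emeasure M {\<omega>\<in>space M. Y \<omega> = x}" for x
      by (subst emeasure_distr) (auto intro!: arg_cong2[where f=emeasure])
    then show ?thesis
      using atomless by (simp add: emeasure_eq_measure)
  qed
  finally show ?thesis
    by (subst AE_iff_measurable[where N="{\<omega>\<in>space M. X \<omega> = Y \<omega>}"]) auto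
qed

lemma (in prob_space) distr_indep_identical_vector:
  assumes indep: "indep_vars (\<lambda>_. borel) X I" and "I \<noteq> {}"
    and ident: "\<And>i. i \<in> I \<Longrightarrow> distr M borel (X i) = D"
  shows "distr M (\<Pi>\<^sub>M i\<in>I. borel) (\<lambda>\<omega>. \<lambda>i\<in>I. X i \<omega>) = (\<Pi>\<^sub>M i\<in>I. D)"
proof -
  have "distr M (\<Pi>\<^sub>M i\<in>I. borel) (\<lambda>\<omega>. \<lambda>i\<in>I. X i \<omega>) = (\<Pi>\<^sub>M i\<in>I. distr M borel (X i))"
    using indep \<open>I \<noteq> {}\<close> by (subst indep_vars_iff_distr_eq_PiM'[symmetric]) (auto simp: indep_vars_def)
  also have "\<dots> = (\<Pi>\<^sub>M i\<in>I. D)"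
    using ident by (intro PiM_cong) auto
  finally show ?thesis .
qed

lemma (in prob_space) prob_indep_identical_permute:
  fixes X :: "'i \<Rightarrow> 'a \<Rightarrow> real"
  assumes indep: "indep_vars (\<lambda>_. borel) X I" and "j \<in> I"
    and ident: "\<And>i. i \<in> I \<Longrightarrow> distr M borel (X i) = distr M borel (X j)"
    and \<pi>: "bij_betw \<pi> I I" and S: "S \<in> sets (\<Pi>\<^sub>M i\<in>I. borel)"
  shows "prob {\<omega>\<in>space M. (\<lambda>i\<in>I. X (\<pi> i) \<omega>) \<in> S} = prob {\<omega>\<in>space M. (\<lambda>i\<in>I. X i \<omega>) \<in> S}"
proof -
  let ?B = "\<Pi>\<^sub>M i\<in>I. (borel :: real measure)" and ?D = "distr M borel (X j)"
  let ?V = "\<lambda>\<omega>. \<lambda>i\<in>I. X i \<omega>" and ?g = "\<lambda>x. \<lambda>i\<in>I. x (\<pi> i)"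
  have X: "\<And>i. i \<in> I \<Longrightarrow> X i \<in> borel_measurable M"
    using indep by (auto simp: indep_vars_def)
  have \<pi>I: "\<And>i. i \<in> I \<Longrightarrow> \<pi> i \<in> I"
    using \<pi> by (auto simp: bij_betw_def)
  have V: "?V \<in> measurable M ?B"
    by (intro measurable_restrict X)
  have g: "?g \<in> measurable ?B ?B"
    by (intro measurable_restrict measurable_component_singleton \<pi>I)
  have D: "prob_space ?D"
    using X \<open>j \<in> I\<close> by (intro prob_space_distr) auto
  have law: "distr M ?B ?V = (\<Pi>\<^sub>M i\<in>I. ?D)"
    using distr_indep_identical_vector[OF indep _ ident] \<open>j \<in> I\<close> by auto
  have "(\<lambda>\<omega>. \<lambda>i\<in>I. X (\<pi> i) \<omega>) = ?g \<circ> ?V"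
    by (auto simp: fun_eq_iff \<pi>I)
  then have "distr M ?B (\<lambda>\<omega>. \<lambda>i\<in>I. X (\<pi> i) \<omega>) = distr (distr M ?B ?V) ?B ?g"
    by (simp add: distr_distr[OF g V])
  also have "\<dots> = distr (\<Pi>\<^sub>M i\<in>I. ?D) (\<Pi>\<^sub>M i\<in>I. ?D) ?g"
    unfolding law by (intro distr_cong refl sets_PiM_cong) auto
  also have "\<dots> = (\<Pi>\<^sub>M i\<in>I. ?D)"
    using D \<pi> \<pi>I by (intro distr_PiM_reindex) (auto simp: bij_betw_def)
  finally have "distr M ?B (\<lambda>\<omega>. \<lambda>i\<in>I. X (\<pi> i) \<omega>) = distr M ?B ?V"
    by (simp add: law)
  moreover have "prob {\<omega>\<in>space M. f \<omega> \<in> S} = measure (distr M ?B f) S" if "f \<in> measurable M ?B" for f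
    using measure_distr[OF that S] by (simp add: vimage_def Collect_conj_eq Int_commute)
  moreover have "(\<lambda>\<omega>. \<lambda>i\<in>I. X (\<pi> i) \<omega>) \<in> measurable M ?B"
    by (intro measurable_restrict X \<pi>I)
  ultimately show ?thesis
    using V by simp
qed

section \<open>Counting nested pairs of sets\<close>

lemma exists_bij_betw_nested_pair:
  assumes "finite I" "B \<subseteq> A" "A \<subseteq> I" "B' \<subseteq> A'" "A' \<subseteq> I"
    and "card A = card A'" "card B = card B'"
  shows "\<exists>\<pi>. bij_betw \<pi> I I \<and> \<pi> ` A = A' \<and> \<pi> ` B = B'"
proof -
  have fin: "finite A" "finite A'" "finite B" "finite B'"
    using finite_subset[OF assms(3,1)] finite_subset[OF assms(5,1)]
      finite_subset[OF assms(2)] finite_subset[OF assms(4)] by auto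
  obtain f1 where f1: "bij_betw f1 B B'"
    using finite_same_card_bij[OF fin(3,4) assms(7)] by blast
  have "card (A - B) = card (A' - B')"
    using fin assms by (simp add: card_Diff_subset)
  then obtain f2 where f2: "bij_betw f2 (A - B) (A' - B')"
    using finite_same_card_bij[OF finite_Diff[OF fin(1)] finite_Diff[OF fin(2)]] by blast
  have "card (I - A) = card (I - A')"
    using fin assms by (simp add: card_Diff_subset)
  then obtain f3 where f3: "bij_betw f3 (I - A) (I - A')"
    using finite_same_card_bij[OF finite_Diff[OF assms(1)] finite_Diff[OF assms(1)]] by blast
  define \<pi> where "\<pi> x = (if x \<in> B then f1 x else if x \<in> A then f2 x else f3 x)" for x
  have "bij_betw \<pi> B B'"
    using f1 by (subst bij_betw_cong[of B \<pi> f1]) (auto simp: \<pi>_def)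
  moreover have "bij_betw \<pi> (A - B) (A' - B')"
    using f2 by (subst bij_betw_cong[of "A - B" \<pi> f2]) (auto simp: \<pi>_def)
  ultimately have \<pi>A: "bij_betw \<pi> A A'"
    using bij_betw_combine[of \<pi> B B' "A - B" "A' - B'"] assms(2,4)
    by (simp add: Un_absorb1 Un_Diff_cancel)
  have "bij_betw \<pi> (I - A) (I - A')"
    using f3 assms(2) by (subst bij_betw_cong[of "I - A" \<pi> f3]) (auto simp: \<pi>_def)
  then have "bij_betw \<pi> (A \<union> (I - A)) (A' \<union> (I - A'))"
    by (rule bij_betw_combine[OF \<pi>A]) auto
  then have "bij_betw \<pi> I I"
    using assms(3,5) by (simp add: Un_absorb1)
  then show ?thesis
    using \<pi>A \<open>bij_betw \<pi> B B'\<close> by (auto simp: bij_betw_def)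
qed

lemma card_nested_pairs:
  assumes "finite I"
  shows "card {(A, B). A \<subseteq> I \<and> card A = a \<and> B \<subseteq> A \<and> card B = b} = (card I choose a) * (a choose b)"
proof -
  have "{(A, B). A \<subseteq> I \<and> card A = a \<and> B \<subseteq> A \<and> card B = b}
      = Sigma {A. A \<subseteq> I \<and> card A = a} (\<lambda>A. {B. B \<subseteq> A \<and> card B = b})"
    by auto
  moreover have "card {B. B \<subseteq> A \<and> card B = b} = a choose b" if "A \<subseteq> I" "card A = a" for A
    using n_subsets[OF finite_subset[OF that(1) assms]] that(2) by simp
  moreover have "finite {B. B \<subseteq> A \<and> card B = b}" if "A \<subseteq> I" for A
    using finite_subset[OF that assms] by simp
  moreover have "finite {A. A \<subseteq> I \<and> card A = a}"
    using assms by simp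
  ultimately show ?thesis
    using assms by (simp add: card_SigmaI n_subsets)
qed

lemma q0_commute: "q0 n A B = q0 n B A"
  unfolding q0_def by (auto dest: subset_antisym)

lemma q0_nested:
  assumes "B \<subseteq> A" "A \<subseteq> {1..n}"
  shows "q0 n A B * real ((n choose card A) * (card A choose card B)) = 1"
proof -
  have "finite A"
    using finite_subset[OF assms(2)] by simp
  then have ba: "card B \<le> card A" and an: "card A \<le> n"
    using card_mono[OF _ assms(1)] card_mono[OF _ assms(2)] by auto
  have "fact n = fact (card B) * fact (card A - card B) * real (card A choose card B)
      * fact (n - card A) * real (n choose card A)"
    using binomial_fact_lemma[OF an] binomial_fact_lemma[OF ba] by (metis of_nat_fact of_nat_mult)
  then show ?thesis
    using assms(1) ba an by (simp add: q0_def)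
qed

section \<open>Components outliving all others\<close>

definition outlives :: "nat \<Rightarrow> nat set \<Rightarrow> (nat \<Rightarrow> real) \<Rightarrow> bool" where
  "outlives n A x \<longleftrightarrow> (\<forall>a\<in>A. \<forall>c\<in>{1..n} - A. x c < x a)"

lemma outlives_state_set: "outlives n (state_set n T t \<omega>) (\<lambda>j. T j \<omega>)"
  by (auto simp: outlives_def state_set_def)

lemma outlives_subset:
  assumes "A \<subseteq> {1..n}" "B \<subseteq> {1..n}" "outlives n A x" "outlives n B x" "card B \<le> card A"
  shows "B \<subseteq> A"
proof (rule ccontr)
  assume "\<not> B \<subseteq> A"
  then obtain b where b: "b \<in> B" "b \<notin> A"
    by auto
  have "A \<subseteq> B"
  proof
    fix a assume "a \<in> A"
    show "a \<in> B"
    proof (rule ccontr)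
      assume "a \<notin> B"
      then have "x a < x b"
        using assms(1,4) b \<open>a \<in> A\<close> unfolding outlives_def by blast
      moreover have "x b < x a"
        using assms(2,3) b \<open>a \<in> A\<close> unfolding outlives_def by blast
      ultimately show False
        by simp
    qed
  qed
  have "finite B"
    using finite_subset[OF assms(2)] by simp
  then have "A = B"
    using card_subset_eq[OF _ \<open>A \<subseteq> B\<close>] card_mono[OF _ \<open>A \<subseteq> B\<close>] assms(5) by simp
  then show False
    using b by simp
qed

lemma outlives_unique:
  assumes "A \<subseteq> {1..n}" "B \<subseteq> {1..n}" "outlives n A x" "outlives n B x" "card A = card B"
  shows "A = B"
  using outlives_subset[OF assms(1-4)] outlives_subset[OF assms(2,1,4,3)] assms(5) by auto

lemma outlives_image:
  assumes "bij_betw \<pi> {1..n} {1..n}" "A \<subseteq> {1..n}"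
  shows "outlives n (\<pi> ` A) x \<longleftrightarrow> outlives n A (x \<circ> \<pi>)"
proof -
  have "\<pi> ` ({1..n} - A) = \<pi> ` {1..n} - \<pi> ` A"
    using assms by (intro inj_on_image_set_diff) (auto simp: bij_betw_def)
  then have "{1..n} - \<pi> ` A = \<pi> ` ({1..n} - A)"
    using assms(1) by (simp add: bij_betw_def)
  then show ?thesis
    by (simp add: outlives_def)
qed

lemma pred_outlives:
  assumes "A \<subseteq> {1..n}" "\<And>j. j \<in> {1..n} \<Longrightarrow> (\<lambda>\<omega>. X \<omega> j) \<in> borel_measurable M"
  shows "Measurable.pred M (\<lambda>\<omega>. outlives n A (X \<omega>))"
proof -
  have "Measurable.pred M (\<lambda>\<omega>. X \<omega> c < X \<omega> a)" if "a \<in> {1..n}" "c \<in> {1..n}" for a c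
    using assms(2)[OF that(1)] assms(2)[OF that(2)] by measurable
  then show ?thesis
    unfolding outlives_def using assms(1) finite_subset[OF assms(1)]
    by (intro pred_intros_finite(3)) auto
qed

lemma outlives_restrict:
  assumes "A \<subseteq> {1..n}"
  shows "outlives n A (restrict x {1..n}) \<longleftrightarrow> outlives n A x"
  using assms by (auto simp: outlives_def)

lemma outlives_iff_state_set_order_stat:
  assumes inj: "inj_on (\<lambda>j. T j \<omega>) {1..n}" and pos: "\<forall>j\<in>{1..n}. 0 < T j \<omega>" and "k \<le> n"
    and A: "A \<subseteq> {1..n}" "card A = n - k"
  shows "outlives n A (\<lambda>j. T j \<omega>) \<longleftrightarrow> A = state_set n T (order_stat n T k \<omega>) \<omega>"
proof
  let ?S = "state_set n T (order_stat n T k \<omega>) \<omega>"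
  assume "outlives n A (\<lambda>j. T j \<omega>)"
  moreover have "?S \<subseteq> {1..n}"
    by (auto simp: state_set_def)
  moreover have "card ?S = card A"
    using card_state_set_order_stat[of T \<omega> n k] inj pos \<open>k \<le> n\<close> A(2) by simp
  ultimately show "A = ?S"
    using outlives_unique[OF A(1)] outlives_state_set by metis
qed (simp add: outlives_state_set)

lemma (in prob_space) prob_eq_sum_AE_partition:
  assumes "finite I" "disjoint_family_on F I" "\<And>i. i \<in> I \<Longrightarrow> F i \<in> events" "S \<in> events"
    and "AE \<omega> in M. \<omega> \<in> S \<longleftrightarrow> (\<exists>i\<in>I. \<omega> \<in> F i)"
  shows "prob S = (\<Sum>i\<in>I. prob (F i))"
proof -
  have "prob S = prob (\<Union>i\<in>I. F i)"
    using assms by (intro measure_eq_AE) auto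
  also have "\<dots> = (\<Sum>i\<in>I. prob (F i))"
    using assms by (intro measure_finite_Union) auto
  finally show ?thesis .
qed

locale iid_lifetimes = prob_space M for M :: "'a measure" +
  fixes n :: nat and T :: "nat \<Rightarrow> 'a \<Rightarrow> real"
  assumes indep: "indep_vars (\<lambda>_. borel) T {1..n}"
    and ident: "\<And>j. j \<in> {1..n} \<Longrightarrow> distr M borel (T j) = distr M borel (T 1)"
    and atomless: "\<And>t. prob {\<omega>\<in>space M. T 1 \<omega> = t} = 0"
    and nonneg: "\<And>j \<omega>. j \<in> {1..n} \<Longrightarrow> \<omega> \<in> space M \<Longrightarrow> 0 \<le> T j \<omega>"
begin

lemma T_measurable: "j \<in> {1..n} \<Longrightarrow> T j \<in> borel_measurable M"
  using indep by (auto simp: indep_vars_def)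

lemma T_atomless:
  assumes "j \<in> {1..n}"
  shows "prob {\<omega>\<in>space M. T j \<omega> = t} = 0"
proof -
  have law: "prob {\<omega>\<in>space M. T i \<omega> = t} = measure (distr M borel (T i)) {t}" if "i \<in> {1..n}" for i
    using measure_distr[OF T_measurable[OF that], of "{t}"] by (simp add: vimage_def Collect_conj_eq Int_commute)
  have "1 \<in> {1..n}"
    using assms by simp
  then show ?thesis
    using law[OF assms] law[of 1] ident[OF assms] atomless[of t] by simp
qed

lemma indep_var_T:
  assumes "i \<in> {1..n}" "j \<in> {1..n}" "i \<noteq> j"
  shows "indep_var borel (T i) borel (T j)"
proof -
  have "indep_var (\<Pi>\<^sub>M k\<in>{i}. borel) (\<lambda>\<omega>. \<lambda>k\<in>{i}. T k \<omega>) (\<Pi>\<^sub>M k\<in>{j}. borel) (\<lambda>\<omega>. \<lambda>k\<in>{j}. T k \<omega>)"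
    using assms by (intro indep_var_restrict[OF indep]) auto
  then have "indep_var borel ((\<lambda>f. f i) \<circ> (\<lambda>\<omega>. \<lambda>k\<in>{i}. T k \<omega>)) borel ((\<lambda>f. f j) \<circ> (\<lambda>\<omega>. \<lambda>k\<in>{j}. T k \<omega>))"
    by (rule indep_var_compose) (auto intro!: measurable_component_singleton)
  then show ?thesis
    by (simp add: comp_def)
qed

lemma AE_distinct_positive: "AE \<omega> in M. inj_on (\<lambda>j. T j \<omega>) {1..n} \<and> (\<forall>j\<in>{1..n}. 0 < T j \<omega>)"
proof -
  have "AE \<omega> in M. \<forall>i\<in>{1..n}. \<forall>j\<in>{1..n}. i \<noteq> j \<longrightarrow> T i \<omega> \<noteq> T j \<omega>"
    using AE_indep_var_neq[OF indep_var_T T_atomless] by (intro AE_finite_allI) auto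
  moreover have "AE \<omega> in M. \<forall>j\<in>{1..n}. T j \<omega> \<noteq> 0"
  proof (intro AE_finite_allI finite_atLeastAtMost)
    fix j assume j: "j \<in> {1..n}"
    have [measurable]: "T j \<in> borel_measurable M"
      using T_measurable[OF j] .
    show "AE \<omega> in M. T j \<omega> \<noteq> 0"
      using T_atomless[OF j, of 0] by (subst AE_iff_measurable[OF _ refl]) (auto simp: emeasure_eq_measure)
  qed
  moreover note AE_space
  ultimately show ?thesis
  proof eventually_elim
    case (elim \<omega>)
    then show ?case
      using nonneg[of _ \<omega>] by (auto simp: inj_on_def less_le)
  qed
qed

definition outlive_event :: "nat set \<Rightarrow> nat set \<Rightarrow> 'a set" where
  "outlive_event A B = {\<omega>\<in>space M. outlives n A (\<lambda>j. T j \<omega>) \<and> outlives n B (\<lambda>j. T j \<omega>)}"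

lemma outlive_event_sets:
  assumes "A \<subseteq> {1..n}" "B \<subseteq> {1..n}"
  shows "outlive_event A B \<in> events"
proof -
  have "Measurable.pred M (\<lambda>\<omega>. outlives n A (\<lambda>j. T j \<omega>) \<and> outlives n B (\<lambda>j. T j \<omega>))"
    using assms T_measurable by (intro pred_intros_logic(3) pred_outlives) auto
  then show ?thesis
    by (simp add: outlive_event_def pred_def)
qed

lemma disjoint_family_outlive_event:
  "disjoint_family_on (\<lambda>(A, B). outlive_event A B)
     ({A. A \<subseteq> {1..n} \<and> card A = a} \<times> {B. B \<subseteq> {1..n} \<and> card B = b})"
  unfolding disjoint_family_on_def
proof (intro ballI impI)
  fix p q
  assume "p \<in> {A. A \<subseteq> {1..n} \<and> card A = a} \<times> {B. B \<subseteq> {1..n} \<and> card B = b}"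
    and "q \<in> {A. A \<subseteq> {1..n} \<and> card A = a} \<times> {B. B \<subseteq> {1..n} \<and> card B = b}"
    and "p \<noteq> q"
  then obtain A B A' B' where pq: "p = (A, B)" "q = (A', B')" "(A, B) \<noteq> (A', B')"
    and sub: "A \<subseteq> {1..n}" "B \<subseteq> {1..n}" "A' \<subseteq> {1..n}" "B' \<subseteq> {1..n}"
    and card: "card A = card A'" "card B = card B'"
    by (cases p, cases q) auto
  show "(case p of (A, B) \<Rightarrow> outlive_event A B) \<inter> (case q of (A, B) \<Rightarrow> outlive_event A B) = {}"
  proof (rule ccontr)
    assume "(case p of (A, B) \<Rightarrow> outlive_event A B) \<inter> (case q of (A, B) \<Rightarrow> outlive_event A B) \<noteq> {}"
    then obtain \<omega> where "outlives n A (\<lambda>j. T j \<omega>)" "outlives n B (\<lambda>j. T j \<omega>)"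
      "outlives n A' (\<lambda>j. T j \<omega>)" "outlives n B' (\<lambda>j. T j \<omega>)"
      by (auto simp: pq outlive_event_def)
    then have "A = A'" "B = B'"
      using outlives_unique[OF sub(1,3) _ _ card(1)] outlives_unique[OF sub(2,4) _ _ card(2)] by auto
    then show False
      using pq(3) by simp
  qed
qed

lemma prob_outlive_event_permute:
  assumes \<pi>: "bij_betw \<pi> {1..n} {1..n}" and A: "A \<subseteq> {1..n}" and B: "B \<subseteq> {1..n}"
  shows "prob (outlive_event (\<pi> ` A) (\<pi> ` B)) = prob (outlive_event A B)"
proof (cases "n = 0")
  case True
  then show ?thesis
    using A B by simp
next
  case False
  let ?B = "\<Pi>\<^sub>M i\<in>{1..n}. (borel :: real measure)"
  let ?S = "{x\<in>space ?B. outlives n A x \<and> outlives n B x}"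
  have "Measurable.pred ?B (\<lambda>x. outlives n A x \<and> outlives n B x)"
    using A B by (intro pred_intros_logic(3) pred_outlives measurable_component_singleton) auto
  then have S: "?S \<in> sets ?B"
    by (simp add: pred_def)
  have "outlive_event (\<pi> ` A) (\<pi> ` B) = {\<omega>\<in>space M. (\<lambda>i\<in>{1..n}. T (\<pi> i) \<omega>) \<in> ?S}"
    using outlives_image[OF \<pi> A] outlives_image[OF \<pi> B] outlives_restrict[OF A] outlives_restrict[OF B]
    by (auto simp: outlive_event_def comp_def space_PiM)
  moreover have "outlive_event A B = {\<omega>\<in>space M. (\<lambda>i\<in>{1..n}. T i \<omega>) \<in> ?S}"
    using outlives_restrict[OF A] outlives_restrict[OF B] by (auto simp: outlive_event_def space_PiM)
  moreover have "1 \<in> {1..n}"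
    using False by simp
  ultimately show ?thesis
    using prob_indep_identical_permute[OF indep _ ident \<pi> S] by simp
qed

lemma pred_state_set_order_stat:
  assumes "k \<le> n"
  shows "Measurable.pred M (\<lambda>\<omega>. \<phi> (state_set n T (order_stat n T k \<omega>) \<omega>))"
proof -
  let ?S = "\<lambda>\<omega>. state_set n T (order_stat n T k \<omega>) \<omega>"
  have mem: "Measurable.pred M (\<lambda>\<omega>. j \<in> ?S \<omega>)" if j: "j \<in> {1..n}" for j
  proof -
    have less: "Measurable.pred M (\<lambda>\<omega>. T i \<omega> < T j \<omega>)" if "i \<in> {1..n}" for i
      using T_measurable[OF that] T_measurable[OF j] by measurable
    show ?thesis
    proof (cases "k = 0")
      case True
      then have eq: "(\<lambda>\<omega>. j \<in> ?S \<omega>) = (\<lambda>\<omega>. 0 < T j \<omega>)"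
        using j by (simp add: state_set_def order_stat_def)
      show ?thesis
        unfolding eq using T_measurable[OF j] by measurable
    next
      case False
      then have "(\<lambda>\<omega>. j \<in> ?S \<omega>) = (\<lambda>\<omega>. k \<le> card {i\<in>{1..n}. T i \<omega> < T j \<omega>})"
        using order_stat_less_iff[of k n j T] assms j by (simp add: state_set_def)
      then show ?thesis
        using less by (simp add: pred_le_card)
    qed
  qed
  show ?thesis
    using mem by (rule pred_set_valued[of "{1..n}", rotated 2]) (auto simp: state_set_def)
qed

lemma sum_prob_nested_outlive_events:
  assumes "b \<le> a" "a \<le> n"
  shows "(\<Sum>(A, B)\<in>{(A, B). A \<subseteq> {1..n} \<and> card A = a \<and> B \<subseteq> A \<and> card B = b}. prob (outlive_event A B)) = 1"
    (is "(\<Sum>(A, B)\<in>?Q. _) = 1")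
proof -
  have Q_sub: "?Q \<subseteq> {A. A \<subseteq> {1..n} \<and> card A = a} \<times> {B. B \<subseteq> {1..n} \<and> card B = b}"
    by auto
  have "prob (space M) = (\<Sum>p\<in>?Q. prob (case p of (A, B) \<Rightarrow> outlive_event A B))"
  proof (rule prob_eq_sum_AE_partition)
    show "finite ?Q"
      by (rule finite_subset[of _ "Pow {1..n} \<times> Pow {1..n}"]) auto
    show "disjoint_family_on (\<lambda>(A, B). outlive_event A B) ?Q"
      by (rule disjoint_family_on_mono[OF Q_sub disjoint_family_outlive_event])
    show "(case p of (A, B) \<Rightarrow> outlive_event A B) \<in> events" if "p \<in> ?Q" for p
      using that by (auto intro!: outlive_event_sets)
    show "AE \<omega> in M. \<omega> \<in> space M \<longleftrightarrow> (\<exists>p\<in>?Q. \<omega> \<in> (case p of (A, B) \<Rightarrow> outlive_event A B))"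
      using AE_distinct_positive AE_space
    proof eventually_elim
      case (elim \<omega>)
      let ?S = "\<lambda>k. state_set n T (order_stat n T k \<omega>) \<omega>"
      have S: "?S k \<subseteq> {1..n}" "card (?S k) = n - k" "outlives n (?S k) (\<lambda>j. T j \<omega>)" if "k \<le> n" for k
        using elim card_state_set_order_stat[of T \<omega> n k] that outlives_state_set[of n T _ \<omega>]
        by (auto simp: state_set_def)
      have "?S (n - b) \<subseteq> ?S (n - a)"
        by (rule outlives_subset[where n=n and x="\<lambda>j. T j \<omega>"]) (use S assms in auto)
      then have "(?S (n - a), ?S (n - b)) \<in> ?Q"
        using S assms by auto
      moreover have "\<omega> \<in> outlive_event (?S (n - a)) (?S (n - b))"
        using elim by (simp add: outlive_event_def outlives_state_set)
      ultimately show ?case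
        using elim by auto
    qed
  qed simp
  then show ?thesis
    by (simp add: prob_space case_prod_beta)
qed

lemma prob_outlive_event_nested:
  assumes BA: "B \<subseteq> A" and A: "A \<subseteq> {1..n}"
  shows "prob (outlive_event A B) = q0 n A B"
proof -
  define Q where "Q = {(A', B'). A' \<subseteq> {1..n} \<and> card A' = card A \<and> B' \<subseteq> A' \<and> card B' = card B}"
  have "finite A"
    using finite_subset[OF A] by simp
  then have ba: "card B \<le> card A" and an: "card A \<le> n"
    using card_mono[OF _ BA] card_mono[OF _ A] by auto
  have same: "prob (outlive_event A' B') = prob (outlive_event A B)" if AB: "(A', B') \<in> Q" for A' B'
  proof -
    obtain \<pi> where "bij_betw \<pi> {1..n} {1..n}" "\<pi> ` A = A'" "\<pi> ` B = B'"
      using exists_bij_betw_nested_pair[of "{1..n}" B A B' A'] AB BA A by (auto simp: Q_def)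
    then show ?thesis
      using prob_outlive_event_permute[of \<pi> A B] BA A by auto
  qed
  have "1 = (\<Sum>(A', B')\<in>Q. prob (outlive_event A' B'))"
    using sum_prob_nested_outlive_events[OF ba an] by (simp add: Q_def)
  also have "\<dots> = real (card Q) * prob (outlive_event A B)"
    using same by (simp add: case_prod_beta)
  also have "card Q = (n choose card A) * (card A choose card B)"
    using card_nested_pairs[of "{1..n}" "card A" "card B"] by (simp add: Q_def)
  finally have "real ((n choose card A) * (card A choose card B)) * prob (outlive_event A B) = 1"
    by simp
  moreover have "real ((n choose card A) * (card A choose card B)) * q0 n A B = 1"
    using q0_nested[OF BA A] by (simp add: mult.commute)
  ultimately show ?thesis
    by (metis mult_cancel_left mult_zero_left zero_neq_one)
qed

lemma prob_outlive_event:
  assumes A: "A \<subseteq> {1..n}" and B: "B \<subseteq> {1..n}"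
  shows "prob (outlive_event A B) = q0 n A B"
proof -
  consider "B \<subseteq> A" | "A \<subseteq> B" | "\<not> B \<subseteq> A" "\<not> A \<subseteq> B"
    by blast
  then show ?thesis
  proof cases
    case 1
    then show ?thesis
      using prob_outlive_event_nested A by blast
  next
    case 2
    then have "prob (outlive_event B A) = q0 n B A"
      using prob_outlive_event_nested B by blast
    moreover have "outlive_event B A = outlive_event A B"
      by (auto simp: outlive_event_def)
    ultimately show ?thesis
      by (simp add: q0_commute)
  next
    case 3
    have "outlive_event A B = {}"
    proof -
      have "card B \<le> card A \<or> card A \<le> card B"
        by linarith
      then show ?thesis
        using outlives_subset[OF A B] outlives_subset[OF B A] 3 by (auto simp: outlive_event_def)
    qed
    then show ?thesis
      using 3 by (simp add: q0_def)
  qed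
qed

lemma AE_outlives_iff_state_set_order_stat:
  assumes "k \<le> n"
  shows "AE \<omega> in M. card (state_set n T (order_stat n T k \<omega>) \<omega>) = n - k \<and>
    (\<forall>A. A \<subseteq> {1..n} \<and> card A = n - k \<longrightarrow>
      (outlives n A (\<lambda>j. T j \<omega>) \<longleftrightarrow> A = state_set n T (order_stat n T k \<omega>) \<omega>))"
  using AE_distinct_positive
proof eventually_elim
  case (elim \<omega>)
  then show ?case
    using card_state_set_order_stat[of T \<omega> n k] outlives_iff_state_set_order_stat[of T \<omega> n k] assms
    by blast
qed

lemma prob_state_sets_order_stats:
  assumes "k \<le> n" "l \<le> n"
  defines "S \<equiv> \<lambda>k \<omega>. state_set n T (order_stat n T k \<omega>) \<omega>"
    and "P \<equiv> {A. A \<subseteq> {1..n} \<and> card A = n - k} \<times> {B. B \<subseteq> {1..n} \<and> card B = n - l}"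
  shows "prob {\<omega>\<in>space M. \<phi>1 (S k \<omega>) \<and> \<phi>2 (S l \<omega>)}
    = (\<Sum>p\<in>{p\<in>P. \<phi>1 (fst p) \<and> \<phi>2 (snd p)}. q0 n (fst p) (snd p))"
proof -
  let ?I = "{p\<in>P. \<phi>1 (fst p) \<and> \<phi>2 (snd p)}"
  have "prob {\<omega>\<in>space M. \<phi>1 (S k \<omega>) \<and> \<phi>2 (S l \<omega>)} = (\<Sum>p\<in>?I. prob (case p of (A, B) \<Rightarrow> outlive_event A B))"
  proof (rule prob_eq_sum_AE_partition)
    show "finite ?I"
      by (rule finite_subset[of _ "Pow {1..n} \<times> Pow {1..n}"]) (auto simp: P_def)
    show "disjoint_family_on (\<lambda>(A, B). outlive_event A B) ?I"
      by (rule disjoint_family_on_mono[OF _ disjoint_family_outlive_event]) (auto simp: P_def)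
    show "(case p of (A, B) \<Rightarrow> outlive_event A B) \<in> events" if "p \<in> ?I" for p
      using that by (auto simp: P_def intro!: outlive_event_sets)
    show "{\<omega>\<in>space M. \<phi>1 (S k \<omega>) \<and> \<phi>2 (S l \<omega>)} \<in> events"
      using pred_state_set_order_stat[OF \<open>k \<le> n\<close>] pred_state_set_order_stat[OF \<open>l \<le> n\<close>]
      by (simp add: pred_def S_def)
    show "AE \<omega> in M. \<omega> \<in> {\<omega>\<in>space M. \<phi>1 (S k \<omega>) \<and> \<phi>2 (S l \<omega>)}
        \<longleftrightarrow> (\<exists>p\<in>?I. \<omega> \<in> (case p of (A, B) \<Rightarrow> outlive_event A B))"
      using AE_outlives_iff_state_set_order_stat[OF \<open>k \<le> n\<close>]
        AE_outlives_iff_state_set_order_stat[OF \<open>l \<le> n\<close>] AE_space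
    proof eventually_elim
      case (elim \<omega>)
      have event_iff: "\<omega> \<in> outlive_event A B \<longleftrightarrow> (A, B) = (S k \<omega>, S l \<omega>)" if "(A, B) \<in> P" for A B
        using that elim by (simp add: outlive_event_def S_def P_def)
      have "(S k \<omega>, S l \<omega>) \<in> P"
        using elim by (auto simp: S_def P_def state_set_def)
      then show ?case
        using event_iff elim by auto
    qed
  qed
  also have "\<dots> = (\<Sum>p\<in>?I. q0 n (fst p) (snd p))"
  proof (rule sum.cong[OF refl])
    fix p assume p: "p \<in> ?I"
    obtain A B where "p = (A, B)"
      by (cases p)
    with p show "prob (case p of (A, B) \<Rightarrow> outlive_event A B) = q0 n (fst p) (snd p)"
      by (simp add: prob_outlive_event P_def)
  qed
  finally show ?thesis .
qed

end

theorem corollary9: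
  fixes M :: "'a measure" and n :: nat and T :: "nat \<Rightarrow> 'a \<Rightarrow> real"
    and \<phi>1 \<phi>2 :: "nat set \<Rightarrow> bool" and TS1 TS2 :: "'a \<Rightarrow> real" and k l :: nat
  assumes "prob_space M"
    and "n \<ge> 1"
    and rv: "\<And>j. j \<in> {1..n} \<Longrightarrow> T j \<in> borel_measurable M"
    and nonneg: "\<And>j \<omega>. j \<in> {1..n} \<Longrightarrow> \<omega> \<in> space M \<Longrightarrow> 0 \<le> T j \<omega>"
    and indep: "prob_space.indep_vars M (\<lambda>_. borel) T {1..n}"
    and ident: "\<And>j. j \<in> {1..n} \<Longrightarrow> distr M borel (T j) = distr M borel (T 1)"
    and cont: "\<And>t. measure M {\<omega> \<in> space M. T 1 \<omega> = t} = 0"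
    and sc1: "semicoherent n \<phi>1" and sc2: "semicoherent n \<phi>2"
    and life1: "is_system_lifetime M n \<phi>1 T TS1"
    and life2: "is_system_lifetime M n \<phi>2 T TS2"
    and "k \<le> n" and "l \<le> n"
  shows "measure M {\<omega> \<in> space M. TS1 \<omega> > order_stat n T k \<omega> \<and> TS2 \<omega> > order_stat n T l \<omega>}
    = (\<Sum>A\<in>{A. A \<subseteq> {1..n} \<and> card A = n - k}. \<Sum>B\<in>{B. B \<subseteq> {1..n} \<and> card B = n - l}.
         q0 n A B * of_bool (\<phi>1 A) * of_bool (\<phi>2 B))"
proof -
  interpret iid_lifetimes M n T
    by (rule iid_lifetimes.intro[OF \<open>prob_space M\<close> iid_lifetimes_axioms.intro[OF indep ident cont nonneg]])
  let ?S = "\<lambda>k \<omega>. state_set n T (order_stat n T k \<omega>) \<omega>"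
  let ?P = "{A. A \<subseteq> {1..n} \<and> card A = n - k} \<times> {B. B \<subseteq> {1..n} \<and> card B = n - l}"
  have "finite ?P"
    by (rule finite_subset[of _ "Pow {1..n} \<times> Pow {1..n}"]) auto
  have event_eq: "{\<omega>\<in>space M. TS1 \<omega> > order_stat n T k \<omega> \<and> TS2 \<omega> > order_stat n T l \<omega>}
      = {\<omega>\<in>space M. \<phi>1 (?S k \<omega>) \<and> \<phi>2 (?S l \<omega>)}"
    using life1 life2 by (auto simp: is_system_lifetime_def)
  have "prob {\<omega>\<in>space M. \<phi>1 (?S k \<omega>) \<and> \<phi>2 (?S l \<omega>)}
      = (\<Sum>p\<in>{p\<in>?P. \<phi>1 (fst p) \<and> \<phi>2 (snd p)}. q0 n (fst p) (snd p))"
    by (rule prob_state_sets_order_stats[OF \<open>k \<le> n\<close> \<open>l \<le> n\<close>])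
  also have "\<dots> = (\<Sum>p\<in>?P. if \<phi>1 (fst p) \<and> \<phi>2 (snd p) then q0 n (fst p) (snd p) else 0)"
    by (rule sum.inter_filter[OF \<open>finite ?P\<close>])
  also have "\<dots> = (\<Sum>p\<in>?P. q0 n (fst p) (snd p) * of_bool (\<phi>1 (fst p)) * of_bool (\<phi>2 (snd p)))"
    by (rule sum.cong[OF refl]) simp
  also have "\<dots> = (\<Sum>A\<in>{A. A \<subseteq> {1..n} \<and> card A = n - k}. \<Sum>B\<in>{B. B \<subseteq> {1..n} \<and> card B = n - l}.
         q0 n A B * of_bool (\<phi>1 A) * of_bool (\<phi>2 B))"
    by (simp only: sum.cartesian_product split_def)
  finally show ?thesis
    unfolding event_eq .
qed

end
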